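(* For any $n\ge1$, $$C_n(q)=\sum_{\pi\in\widetilde{\mathfrak{S}}_{2n+1,n}(213)}q^{\,n^2-(3\text{-}12)\pi}.$$
   Context: $C_n(q):=C_n(q,q^2)$, where $C_n(t,q)$ is defined by $\sum_{n\ge0}C_n(t,q)z^n=1/(1-c_1z/(1-c_2z/(1-c_3z/\cdots)))$ with $c_{2k-1}=q^{k-1}$, $c_{2k}=tq^{k-1}$. $(3\text{-}12)\pi=\#\{(i,j):i<j<m,\ \pi(j)<\pi(j+1)<\pi(i)\}$ for $\pi\in\mathfrak{S}_m$. $\mathsf{des}\,\pi=\#\{i\in[m-1]:\pi(i)>\pi(i+1)\}$; $\mathsf{dd}\,\pi$ is the number of $i\in[m]$ with $\pi(i-1)>\pi(i)>\pi(i+1)$ under $\pi(0)=\pi(m+1)=0$. $\widetilde{\mathfrak{S}}_{m,k}(213)=\{\pi\in\mathfrak{S}_m:\pi\text{ avoids }213,\ \mathsf{dd}\,\pi=0,\ \mathsf{des}\,\pi=k\}$. *)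

theory Defs
  imports "HOL-Computational_Algebra.Formal_Power_Series" "HOL-Combinatorics.Permutations"
begin

definition cfc :: "real \<Rightarrow> real \<Rightarrow> nat \<Rightarrow> real" where
  "cfc t q j = (if odd j then q ^ ((j - 1) div 2) else t * q ^ (j div 2 - 1))"

fun cf_trunc :: "real \<Rightarrow> real \<Rightarrow> nat \<Rightarrow> nat \<Rightarrow> real fps" where
  "cf_trunc t q 0 j = 1"
| "cf_trunc t q (Suc m) j =
     inverse (1 - fps_const (cfc t q j) * fps_X * cf_trunc t q m (Suc j))"

definition Cfrac :: "real \<Rightarrow> real \<Rightarrow> real fps" where
  "Cfrac t q = lim (\<lambda>m. cf_trunc t q m 1)"

definition C2 :: "nat \<Rightarrow> real \<Rightarrow> real \<Rightarrow> real" where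
  "C2 n t q = fps_nth (Cfrac t q) n"

definition C1 :: "nat \<Rightarrow> real \<Rightarrow> real" where
  "C1 n q = C2 n q (q ^ 2)"

definition pat312 :: "nat \<Rightarrow> (nat \<Rightarrow> nat) \<Rightarrow> nat" where
  "pat312 m p = card {(i, j). 1 \<le> i \<and> i < j \<and> j < m \<and> p j < p (j + 1) \<and> p (j + 1) < p i}"

definition des :: "nat \<Rightarrow> (nat \<Rightarrow> nat) \<Rightarrow> nat" where
  "des m p = card {i \<in> {1..m - 1}. p i > p (i + 1)}"

definition pext :: "nat \<Rightarrow> (nat \<Rightarrow> nat) \<Rightarrow> nat \<Rightarrow> nat" where
  "pext m p i = (if i \<in> {1..m} then p i else 0)"

definition dd :: "nat \<Rightarrow> (nat \<Rightarrow> nat) \<Rightarrow> nat" where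
  "dd m p = card {i \<in> {1..m}. pext m p (i - 1) > pext m p i \<and> pext m p i > pext m p (i + 1)}"

definition avoids213 :: "nat \<Rightarrow> (nat \<Rightarrow> nat) \<Rightarrow> bool" where
  "avoids213 m p \<longleftrightarrow> \<not> (\<exists>i j k. 1 \<le> i \<and> i < j \<and> j < k \<and> k \<le> m \<and> p j < p i \<and> p i < p k)"

definition S213 :: "nat \<Rightarrow> nat \<Rightarrow> (nat \<Rightarrow> nat) set" where
  "S213 m k = {p. p permutes {1..m} \<and> avoids213 m p \<and> dd m p = 0 \<and> des m p = k}"

end

theory Submission
  imports Defs
begin

text \<open>
  At \<open>t = q^2\<close> the coefficients of the continued fraction are \<open>c_j = q^(j-1)\<close>, so it expands
  into Carlitz's \<open>q\<close>-Catalan numbers, \<open>C_(m+1) = \<Sum>_k q^k C_k C_(m-k)\<close>.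
  For a permutation of \<open>{1..2n+1}\<close>, \<open>dd = 0\<close> and \<open>des = n\<close> force the down-up shape
  \<open>\<pi>(1) > \<pi>(2) < \<pi>(3) > ... < \<pi>(2n+1)\<close>. If such a word avoids 213, its minimum sits at an
  even position, every entry before the minimum exceeds every entry after it, and both parts are
  again 213-avoiding down-up words, of lengths \<open>2k+1\<close> and \<open>2j+1\<close> with \<open>k + j = n - 1\<close>.
  Besides the occurrences of 3-12 inside the parts, every entry of the left part forms one with
  each of the \<open>j + 1\<close> ascents from the minimum on, so the exponent \<open>n^2 - (3-12)\<close> splits as
  \<open>(k^2 - ...) + (j^2 - ...) + j\<close> and the generating function obeys the \<open>q\<close>-Catalan recursion.
\<close>

section \<open>The continued fraction at \<open>t = q\<^sup>2\<close>\<close>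

fun qcatalan :: "real \<Rightarrow> nat \<Rightarrow> real" where
  "qcatalan q 0 = 1"
| "qcatalan q (Suc n) = (\<Sum>k\<le>n. q ^ k * qcatalan q k * qcatalan q (n - k))"

lemma cfc_square: assumes "j \<ge> 1" shows "cfc q (q^2) j = q ^ (j - 1)"
proof (cases "odd j")
  case True
  then obtain k where "j = 2 * k + 1" by (auto elim: oddE)
  then show ?thesis using True by (simp add: cfc_def power_mult[symmetric])
next
  case False
  then obtain k where "j = 2 * k" by (auto elim: evenE)
  with assms obtain k' where "j = 2 * Suc k'" by (cases k) auto
  moreover have "q * (q\<^sup>2) ^ k' = q ^ (2 * k' + 1)" by (simp add: power_mult[symmetric])
  ultimately show ?thesis using False by (simp add: cfc_def)
qed

lemma fps_nth_Suc_inverse_one_minus_X: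
  fixes c :: "'a::field"
  assumes "G = inverse (1 - fps_const c * fps_X * T)"
  shows "fps_nth G (Suc n) = c * fps_nth (T * G) n"
proof -
  have "G * (1 - fps_const c * fps_X * T) = 1"
    unfolding assms by (rule inverse_mult_eq_1) simp
  then have G: "G = 1 + fps_const c * (fps_X * (T * G))" by (simp add: algebra_simps)
  show ?thesis by (subst G) simp
qed

lemma fps_nth_0_cf_trunc: "fps_nth (cf_trunc t q m j) 0 = 1"
  by (cases m) (simp_all add: fps_inverse_def)

lemma fps_nth_cf_trunc_square:
  assumes "j \<ge> 1" "n \<le> m"
  shows "fps_nth (cf_trunc q (q^2) m j) n = q ^ ((j - 1) * n) * qcatalan q n"
  using assms
proof (induction n arbitrary: m j rule: less_induct)
  case (less n)
  show ?case
  proof (cases n)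
    case 0
    then show ?thesis by (simp add: fps_nth_0_cf_trunc)
  next
    case (Suc n')
    then obtain m' where m: "m = Suc m'" using less.prems by (cases m) auto
    define T where "T = cf_trunc q (q^2) m' (Suc j)"
    define G where "G = cf_trunc q (q^2) m j"
    have "G = inverse (1 - fps_const (q ^ (j - 1)) * fps_X * T)"
      unfolding G_def T_def m using cfc_square[OF less.prems(1)] by simp
    then have "fps_nth G n = q ^ (j - 1) * (\<Sum>i=0..n'. fps_nth T i * fps_nth G (n' - i))"
      unfolding Suc by (simp add: fps_nth_Suc_inverse_one_minus_X fps_mult_nth)
    also have "\<dots> = q ^ (j - 1) * (\<Sum>i=0..n'. q ^ ((j - 1) * n') * (q ^ i * qcatalan q i * qcatalan q (n' - i)))"
    proof (intro arg_cong[where f = "(*) _"] sum.cong refl)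
      fix i assume i: "i \<in> {0..n'}"
      have "fps_nth T i = q ^ (j * i) * qcatalan q i"
        using less.IH[of i "Suc j" m'] i Suc less.prems m unfolding T_def by auto
      moreover have "fps_nth G (n' - i) = q ^ ((j - 1) * (n' - i)) * qcatalan q (n' - i)"
        using less.IH[of "n' - i" j m] i Suc less.prems unfolding G_def by auto
      moreover have "j * i + (j - 1) * (n' - i) = (j - 1) * n' + i"
        using i less.prems(1) by (cases j) (auto simp: algebra_simps diff_mult_distrib2)
      then have "q ^ (j * i) * q ^ ((j - 1) * (n' - i)) = q ^ ((j - 1) * n') * q ^ i"
        by (metis power_add)
      ultimately show "fps_nth T i * fps_nth G (n' - i) = q ^ ((j - 1) * n') * (q ^ i * qcatalan q i * qcatalan q (n' - i))"
        by (simp add: algebra_simps)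
    qed
    also have "\<dots> = q ^ ((j - 1) * n) * qcatalan q n"
      unfolding Suc by (simp add: sum_distrib_left[symmetric] atLeast0AtMost power_add mult.assoc)
    finally show ?thesis unfolding G_def .
  qed
qed

lemma C1_eq_qcatalan: "C1 n q = qcatalan q n"
proof -
  have "(\<lambda>m. cf_trunc q (q^2) m 1) \<longlonglongrightarrow> Abs_fps (qcatalan q)"
  proof (rule tendsto_fpsI)
    fix n
    show "\<forall>\<^sub>F m in sequentially. fps_nth (cf_trunc q (q^2) m 1) n = fps_nth (Abs_fps (qcatalan q)) n"
      unfolding eventually_sequentially using fps_nth_cf_trunc_square[of 1 n] by auto
  qed
  then have "Cfrac q (q^2) = Abs_fps (qcatalan q)"
    unfolding Cfrac_def by (rule limI)
  then show ?thesis unfolding C1_def C2_def by simp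
qed

section \<open>The statistic 3-12 on words\<close>

definition ascents_below :: "nat \<Rightarrow> nat list \<Rightarrow> nat" where
  "ascents_below x xs = length (filter (\<lambda>(u, w). u < w \<and> w < x) (zip xs (tl xs)))"

definition ascents :: "nat list \<Rightarrow> nat" where
  "ascents xs = length (filter (\<lambda>(u, w). u < w) (zip xs (tl xs)))"

text \<open>Occurrences of the pattern 3-12: an entry \<open>x\<close> forms one with every later ascent whose top
  lies below \<open>x\<close>.\<close>
fun occ312 :: "nat list \<Rightarrow> nat" where
  "occ312 [] = 0"
| "occ312 (x # xs) = occ312 xs + ascents_below x xs"

lemma zip_tl_append:
  "us \<noteq> [] \<Longrightarrow> vs \<noteq> [] \<Longrightarrow>
    zip (us @ vs) (tl (us @ vs)) = zip us (tl us) @ (last us, hd vs) # zip vs (tl vs)"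
proof (induction us rule: induct_list012)
  case (2 x)
  then show ?case by (cases vs) auto
qed auto

lemma set_zip_tl: "(u, w) \<in> set (zip xs (tl xs)) \<Longrightarrow> u \<in> set xs \<and> w \<in> set xs"
  by (cases xs) (auto dest: set_zip_leftD set_zip_rightD)

lemma ascents_below_above_all: "\<forall>v\<in>set vs. v < x \<Longrightarrow> ascents_below x vs = ascents vs"
  unfolding ascents_below_def ascents_def
  by (rule arg_cong[where f = length], rule filter_cong) (auto dest: set_zip_tl)

lemma ascents_below_below_all: "\<forall>v\<in>set vs. x < v \<Longrightarrow> ascents_below x vs = 0"
  unfolding ascents_below_def by (fastforce simp: filter_empty_conv dest: set_zip_tl)

lemma ascents_below_append:
  assumes "\<forall>u\<in>set us. \<forall>v\<in>set vs. v < u" "\<forall>v\<in>set vs. v < x"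
  shows "ascents_below x (us @ vs) = ascents_below x us + ascents vs"
proof (cases "us = [] \<or> vs = []")
  case True
  then show ?thesis using ascents_below_above_all[OF assms(2)] by (auto simp: ascents_def ascents_below_def)
next
  case False
  then have "hd vs < last us" using assms(1) by auto
  then show ?thesis using False ascents_below_above_all[OF assms(2)]
    unfolding ascents_below_def by (simp add: zip_tl_append del: tl_append2)
qed

lemma occ312_append:
  "\<forall>u\<in>set us. \<forall>v\<in>set vs. v < u \<Longrightarrow> occ312 (us @ vs) = occ312 us + occ312 vs + length us * ascents vs"
proof (induction us)
  case (Cons x us)
  then have "ascents_below x (us @ vs) = ascents_below x us + ascents vs"
    by (intro ascents_below_append) auto
  then show ?case using Cons by simp
qed simp

lemma occ312_Cons_below_all: "\<forall>v\<in>set vs. a < v \<Longrightarrow> occ312 (a # vs) = occ312 vs"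
  by (simp add: ascents_below_below_all)

section \<open>Down-up words avoiding 213\<close>

fun down_up :: "nat list \<Rightarrow> bool" where
  "down_up [x] = True"
| "down_up (x # y # z # zs) = (y < x \<and> y < z \<and> down_up (z # zs))"
| "down_up _ = False"

lemma ascents_down_up: "down_up xs \<Longrightarrow> ascents xs = length xs div 2"
  by (induction xs rule: down_up.induct) (auto simp: ascents_def)

lemma ascents_Cons_less: "a < b \<Longrightarrow> ascents (a # b # vs) = Suc (ascents (b # vs))"
  by (simp add: ascents_def)

lemma down_up_append_Cons_iff:
  "even (length us) \<Longrightarrow> down_up (us @ u # vs) \<longleftrightarrow> down_up (us @ [u]) \<and> down_up (u # vs)"
proof (induction us rule: induct_list012)
  case (3 x y zs)
  then show ?case by (cases zs) auto
qed auto

lemma down_up_min_even_prefix: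
  assumes "down_up (us @ a # vs)" "\<forall>x\<in>set us \<union> set vs. a < x" "even (length us)"
  shows "us = [] \<and> vs = []"
  using assms
proof (induction us rule: induct_list012)
  case 1
  then show ?case by (auto elim: down_up.elims)
next
  case (3 x y zs)
  then have "down_up (zs @ a # vs)" by (cases "zs @ a # vs") auto
  with 3 have "zs = []" by simp
  with 3 show ?case by simp
qed simp

fun precedes :: "'a list \<Rightarrow> 'a \<Rightarrow> 'a \<Rightarrow> bool" where
  "precedes [] x y = False"
| "precedes (z # zs) x y = ((z = x \<and> y \<in> set zs) \<or> precedes zs x y)"

definition avoids213_list :: "nat list \<Rightarrow> bool" where
  "avoids213_list xs \<longleftrightarrow> (\<forall>x y z. precedes xs x y \<longrightarrow> precedes xs y z \<longrightarrow> \<not> (y < x \<and> x < z))"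

lemma precedes_append:
  "precedes (us @ vs) x y \<longleftrightarrow> precedes us x y \<or> precedes vs x y \<or> (x \<in> set us \<and> y \<in> set vs)"
  by (induction us) auto

lemma precedes_setD: "precedes xs x y \<Longrightarrow> x \<in> set xs \<and> y \<in> set xs"
  by (induction xs) auto

lemma precedes_append_left:
  "precedes (us @ vs) x y \<Longrightarrow> y \<in> set us \<Longrightarrow> set us \<inter> set vs = {} \<Longrightarrow> precedes us x y"
  by (auto simp: precedes_append dest: precedes_setD)

lemma precedes_append_right:
  "precedes (us @ vs) x y \<Longrightarrow> x \<in> set vs \<Longrightarrow> set us \<inter> set vs = {} \<Longrightarrow> precedes vs x y"
  by (auto simp: precedes_append dest: precedes_setD)

lemma precedes_conv_nth:
  "precedes xs x y \<longleftrightarrow> (\<exists>i j. i < j \<and> j < length xs \<and> xs ! i = x \<and> xs ! j = y)"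
proof (induction xs)
  case (Cons z zs)
  show ?case
  proof
    assume "precedes (z # zs) x y"
    then consider "z = x" "y \<in> set zs" | "precedes zs x y" by auto
    then show "\<exists>i j. i < j \<and> j < length (z # zs) \<and> (z # zs) ! i = x \<and> (z # zs) ! j = y"
    proof cases
      case 1
      then obtain j where "j < length zs" "zs ! j = y" by (auto simp: in_set_conv_nth)
      with 1 show ?thesis by (intro exI[of _ 0] exI[of _ "Suc j"]) auto
    next
      case 2
      then obtain i j where "i < j" "j < length zs" "zs ! i = x" "zs ! j = y" using Cons.IH by blast
      then show ?thesis by (intro exI[of _ "Suc i"] exI[of _ "Suc j"]) auto
    qed
  next
    assume "\<exists>i j. i < j \<and> j < length (z # zs) \<and> (z # zs) ! i = x \<and> (z # zs) ! j = y"
    then obtain i j where ij: "i < j" "j < length (z # zs)" "(z # zs) ! i = x" "(z # zs) ! j = y"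
      by blast
    then obtain j' where j': "j = Suc j'" by (cases j) auto
    show "precedes (z # zs) x y"
    proof (cases i)
      case 0
      then show ?thesis using ij j' by auto
    next
      case (Suc i')
      then show ?thesis using Cons.IH ij j' by auto
    qed
  qed
qed simp

lemma avoids213_list_append_min_iff:
  assumes ord: "\<forall>u\<in>set us. \<forall>v\<in>set vs. v < u" and low: "\<forall>x\<in>set us \<union> set vs. a < x"
  shows "avoids213_list (us @ a # vs) \<longleftrightarrow> avoids213_list us \<and> avoids213_list vs"
proof
  assume "avoids213_list (us @ a # vs)"
  then show "avoids213_list us \<and> avoids213_list vs"
    unfolding avoids213_list_def precedes_append by auto
next
  assume av: "avoids213_list us \<and> avoids213_list vs"
  define xs where "xs = us @ a # vs"
  have xs_right: "xs = (us @ [a]) @ vs" unfolding xs_def by simp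
  have disj_left: "set us \<inter> set (a # vs) = {}" and disj_right: "set (us @ [a]) \<inter> set vs = {}"
    using ord low by fastforce+
  show "avoids213_list xs" unfolding avoids213_list_def
  proof (intro allI impI notI)
    fix x y z
    assume xy: "precedes xs x y" and yz: "precedes xs y z" and yxz: "y < x \<and> x < z"
    have "a \<le> v" if "v \<in> set xs" for v
      using that low unfolding xs_def by (auto intro: less_imp_le)
    then have "a \<le> x" "a \<le> y" using precedes_setD[OF xy] by auto
    then have "z \<noteq> a" "x \<noteq> a" using yxz by auto
    moreover have "z \<in> set xs" "x \<in> set xs" using precedes_setD[OF xy] precedes_setD[OF yz] by auto
    ultimately have "z \<in> set us \<union> set vs" "x \<in> set us \<union> set vs" unfolding xs_def by auto
    moreover have "x \<notin> set us" if "z \<in> set vs" using that ord yxz by fastforce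
    ultimately consider "z \<in> set us" | "z \<in> set vs" "x \<in> set vs" by blast
    then show False
    proof cases
      case 1
      then have yz_us: "precedes us y z"
        using precedes_append_left[OF yz[unfolded xs_def] _ disj_left] by blast
      then have "precedes us x y"
        using precedes_append_left[OF xy[unfolded xs_def] _ disj_left] precedes_setD[OF yz_us] by blast
      with yz_us show False using av yxz unfolding avoids213_list_def by blast
    next
      case 2
      then have xy_vs: "precedes vs x y"
        using precedes_append_right[OF xy[unfolded xs_right] _ disj_right] by blast
      then have "precedes vs y z"
        using precedes_append_right[OF yz[unfolded xs_right] _ disj_right] precedes_setD[OF xy_vs] by blast
      with xy_vs show False using av yxz unfolding avoids213_list_def by blast
    qed
  qed
qed

lemma avoids213_list_append_min_order:
  assumes "avoids213_list (us @ a # vs)" "\<forall>x\<in>set us \<union> set vs. a < x" "set us \<inter> set vs = {}"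
  shows "\<forall>u\<in>set us. \<forall>v\<in>set vs. v < u"
proof (intro ballI)
  fix u v assume u: "u \<in> set us" and v: "v \<in> set vs"
  have "precedes (us @ a # vs) u a" "precedes (us @ a # vs) a v"
    using u v by (auto simp: precedes_append)
  then have "\<not> (a < u \<and> u < v)" using assms(1) unfolding avoids213_list_def by blast
  moreover have "u \<noteq> v" using u v assms(3) by auto
  ultimately show "v < u" using assms(2) u by auto
qed


definition alt213 :: "nat \<Rightarrow> nat \<Rightarrow> nat list set" where
  "alt213 a n = {xs. distinct xs \<and> set xs = {a..<a + 2 * n + 1} \<and> down_up xs \<and> avoids213_list xs}"

lemma length_alt213:
  assumes "xs \<in> alt213 a n" shows "length xs = 2 * n + 1"
proof -
  have "distinct xs" "set xs = {a..<a + 2 * n + 1}" using assms unfolding alt213_def by blast+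
  then show ?thesis using distinct_card[of xs] by simp
qed

lemma finite_alt213: "finite (alt213 a n)"
proof (rule finite_subset)
  show "alt213 a n \<subseteq> {xs. set xs \<subseteq> {a..<a + 2 * n + 1} \<and> length xs = 2 * n + 1}"
    using length_alt213 by (auto simp: alt213_def)
qed (rule finite_lists_length_eq, simp)

lemma alt213_0: "alt213 a 0 = {[a]}"
proof (intro set_eqI iffI)
  fix xs assume xs: "xs \<in> alt213 a 0"
  then have "length xs = 1" "set xs = {a}" using length_alt213[OF xs] unfolding alt213_def by auto
  then show "xs \<in> {[a]}" by (cases xs) auto
qed (auto simp: alt213_def avoids213_list_def)

lemma atLeastLessThan_split_below:
  fixes S T :: "nat set"
  assumes U: "S \<union> T = {b..<b + t + s}" and card: "card T = t" "finite T"
    and below: "\<forall>x\<in>S. \<forall>y\<in>T. y < x"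
  shows "T = {b..<b + t}" "S = {b + t..<b + t + s}"
proof -
  have sub: "T \<subseteq> {b..<b + t}"
  proof
    fix y assume y: "y \<in> T"
    then have "b \<le> y" "y < b + t + s" using U by auto
    have sub_y: "{b..y} \<subseteq> T"
    proof
      fix z assume z: "z \<in> {b..y}"
      then have "z \<in> S \<union> T" using U \<open>y < b + t + s\<close> by auto
      moreover have "z \<notin> S" using below y z by (meson atLeastAtMost_iff leD)
      ultimately show "z \<in> T" by blast
    qed
    have "card {b..y} \<le> t" using card_mono[OF card(2) sub_y] card(1) by simp
    then show "y \<in> {b..<b + t}" using \<open>b \<le> y\<close> by auto
  qed
  then show T: "T = {b..<b + t}" using card_subset_eq[OF _ sub] card by simp
  have "S \<inter> T = {}" using below by force
  then have "S = (S \<union> T) - T" by auto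
  also have "\<dots> = {b..<b + t + s} - {b..<b + t}" unfolding U by (simp only: T)
  also have "\<dots> = {b + t..<b + t + s}" by auto
  finally show "S = {b + t..<b + t + s}" .
qed

lemma set_append_Cons_split_at_min:
  fixes us vs :: "nat list"
  assumes dist: "distinct (us @ a # vs)" and set: "set (us @ a # vs) = {a..<a + 1 + t + s}"
    and len: "length vs = t" and ord: "\<forall>u\<in>set us. \<forall>v\<in>set vs. v < u"
  shows "set vs = {a + 1..<a + 1 + t}" "set us = {a + 1 + t..<a + 1 + t + s}"
proof -
  have "set us \<union> set vs = set (us @ a # vs) - {a}" using dist by auto
  also have "\<dots> = {a + 1..<a + 1 + t + s}"
    unfolding set by (rule set_eqI) (simp only: Diff_iff atLeastLessThan_iff singleton_iff, arith)
  finally have U: "set us \<union> set vs = {a + 1..<a + 1 + t + s}" .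
  have "card (set vs) = t" using distinct_card[of vs] dist len by simp
  from atLeastLessThan_split_below[OF U this finite_set ord]
  show "set vs = {a + 1..<a + 1 + t}" "set us = {a + 1 + t..<a + 1 + t + s}" by simp_all
qed

lemma alt213_Suc_split:
  assumes xs: "xs \<in> alt213 a (Suc n)"
  obtains k j us vs where "k + j = n" "us \<in> alt213 (a + 2 * j + 2) k" "vs \<in> alt213 (a + 1) j"
    "xs = us @ a # vs"
proof -
  have dist: "distinct xs" and set_xs: "set xs = {a..<a + 2 * Suc n + 1}" and du: "down_up xs"
    and av: "avoids213_list xs"
    using xs unfolding alt213_def by blast+
  have len: "length xs = 2 * n + 3" using length_alt213[OF xs] by simp
  obtain us vs where xs_eq: "xs = us @ a # vs" using set_xs split_list[of a xs] by auto
  have disj: "set us \<inter> set vs = {}" and dist_us: "distinct us" and dist_vs: "distinct vs"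
    using dist xs_eq by auto
  have low: "\<forall>x\<in>set us \<union> set vs. a < x"
  proof
    fix x assume x: "x \<in> set us \<union> set vs"
    then have "x \<in> set xs" unfolding xs_eq by auto
    then have "a \<le> x" unfolding set_xs by simp
    moreover have "x \<noteq> a" using x dist unfolding xs_eq by auto
    ultimately show "a < x" by simp
  qed
  have "odd (length us)"
  proof (rule ccontr)
    assume "\<not> odd (length us)"
    then have "us = [] \<and> vs = []" using down_up_min_even_prefix[OF du[unfolded xs_eq] low] by simp
    then show False using len xs_eq by simp
  qed
  then obtain k where len_us: "length us = 2 * k + 1" by (auto elim: oddE)
  define j where "j = n - k"
  have kj: "k + j = n" and len_vs: "length vs = 2 * j + 1"
    using len len_us xs_eq unfolding j_def by auto
  have ord: "\<forall>u\<in>set us. \<forall>v\<in>set vs. v < u"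
    using avoids213_list_append_min_order[OF av[unfolded xs_eq] low disj] .
  have "a + 2 * Suc n + 1 = a + 1 + (2 * j + 1) + (2 * k + 1)" using kj by simp
  note sets = set_append_Cons_split_at_min[OF dist[unfolded xs_eq] set_xs[unfolded xs_eq this] len_vs ord]
  have "a + 1 + (2 * j + 1) = a + 2 * j + 2" "a + 1 + (2 * j + 1) + (2 * k + 1) = a + 2 * j + 2 + 2 * k + 1"
    by simp_all
  then have set_us: "set us = {a + 2 * j + 2..<a + 2 * j + 2 + 2 * k + 1}"
    and set_vs: "set vs = {a + 1..<a + 1 + 2 * j + 1}"
    using sets by simp_all
  obtain u0 w where us_eq: "us = u0 @ [w]" using len_us by (cases us rule: rev_exhaust) auto
  obtain b v' where vs_eq: "vs = b # v'" using len_vs by (cases vs) auto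
  have "down_up us" "down_up (w # a # vs)"
    using down_up_append_Cons_iff[of u0 w "a # vs"] du len_us xs_eq us_eq by auto
  then have "down_up us" "down_up vs" using vs_eq by auto
  moreover have "avoids213_list us" "avoids213_list vs"
    using avoids213_list_append_min_iff[OF ord low] av xs_eq by auto
  ultimately show thesis
    using that[OF kj _ _ xs_eq] dist_us dist_vs set_us set_vs by (simp add: alt213_def)
qed

lemma alt213_join:
  assumes us: "us \<in> alt213 (a + 2 * j + 2) k" and vs: "vs \<in> alt213 (a + 1) j"
  shows "us @ a # vs \<in> alt213 a (k + j + 1)"
proof -
  have set_us: "set us = {a + 2 * j + 2..<a + 2 * j + 2 + 2 * k + 1}"
    and set_vs: "set vs = {a + 1..<a + 1 + 2 * j + 1}"
    using us vs by (auto simp: alt213_def)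
  have ord: "\<forall>u\<in>set us. \<forall>v\<in>set vs. v < u" and low: "\<forall>x\<in>set us \<union> set vs. a < x"
    using set_us set_vs by auto
  have "distinct us" "distinct vs" using us vs unfolding alt213_def by blast+
  moreover have "a \<notin> set us" "a \<notin> set vs" "set us \<inter> set vs = {}"
    unfolding set_us set_vs by auto
  ultimately have "distinct (us @ a # vs)" by simp
  moreover have "set (us @ a # vs) = {a..<a + 2 * (k + j + 1) + 1}"
  proof (rule set_eqI)
    fix x show "x \<in> set (us @ a # vs) \<longleftrightarrow> x \<in> {a..<a + 2 * (k + j + 1) + 1}"
      unfolding set_append list.set Un_iff insert_iff set_us set_vs atLeastLessThan_iff by arith
  qed
  moreover have "down_up (us @ a # vs)"
  proof -
    obtain u0 w where us_eq: "us = u0 @ [w]"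
      using length_alt213[OF us] by (cases us rule: rev_exhaust) auto
    obtain b v' where vs_eq: "vs = b # v'" using length_alt213[OF vs] by (cases vs) auto
    have "even (length u0)" using length_alt213[OF us] us_eq by simp
    moreover have "a < w" "a < b" using low us_eq vs_eq by auto
    ultimately show ?thesis
      using down_up_append_Cons_iff[of u0 w "a # vs"] us vs us_eq vs_eq by (simp add: alt213_def)
  qed
  moreover have "avoids213_list (us @ a # vs)"
    using avoids213_list_append_min_iff[OF ord low] us vs by (simp add: alt213_def)
  ultimately show ?thesis by (simp add: alt213_def)
qed

lemma alt213_Suc:
  "alt213 a (Suc n) =
    (\<Union>k\<le>n. (\<lambda>(us, vs). us @ a # vs) ` (alt213 (a + 2 * (n - k) + 2) k \<times> alt213 (a + 1) (n - k)))"
proof (intro set_eqI iffI)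
  fix xs assume "xs \<in> alt213 a (Suc n)"
  then obtain k j us vs where "k + j = n" "us \<in> alt213 (a + 2 * j + 2) k" "vs \<in> alt213 (a + 1) j"
    "xs = us @ a # vs"
    by (rule alt213_Suc_split)
  then have "k \<le> n" "(us, vs) \<in> alt213 (a + 2 * (n - k) + 2) k \<times> alt213 (a + 1) (n - k)"
    "xs = (\<lambda>(us, vs). us @ a # vs) (us, vs)"
    by auto
  then show "xs \<in> (\<Union>k\<le>n. (\<lambda>(us, vs). us @ a # vs) ` (alt213 (a + 2 * (n - k) + 2) k \<times> alt213 (a + 1) (n - k)))"
    by blast
next
  fix xs
  assume "xs \<in> (\<Union>k\<le>n. (\<lambda>(us, vs). us @ a # vs) ` (alt213 (a + 2 * (n - k) + 2) k \<times> alt213 (a + 1) (n - k)))"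
  then obtain k us vs where "k \<le> n" "us \<in> alt213 (a + 2 * (n - k) + 2) k" "vs \<in> alt213 (a + 1) (n - k)"
    "xs = us @ a # vs"
    by auto
  then show "xs \<in> alt213 a (Suc n)" using alt213_join[of us a "n - k" k vs] by simp
qed

lemma occ312_join:
  assumes us: "us \<in> alt213 (a + 2 * j + 2) k" and vs: "vs \<in> alt213 (a + 1) j"
  shows "occ312 (us @ a # vs) = occ312 us + occ312 vs + (2 * k + 1) * (j + 1)"
proof -
  have ord: "\<forall>u\<in>set us. \<forall>v\<in>set vs. v < u" and low: "\<forall>v\<in>set vs. a < v"
    and low_us: "\<forall>u\<in>set us. a < u"
    using us vs by (auto simp: alt213_def)
  obtain b v' where vs_eq: "vs = b # v'" using length_alt213[OF vs] by (cases vs) auto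
  have "ascents (a # vs) = Suc (ascents vs)" using low vs_eq by (simp add: ascents_Cons_less)
  also have "ascents vs = j" using ascents_down_up[of vs] vs length_alt213[OF vs] by (simp add: alt213_def)
  finally have "ascents (a # vs) = j + 1" by simp
  moreover have "occ312 (us @ a # vs) = occ312 us + occ312 (a # vs) + length us * ascents (a # vs)"
    using ord low_us by (intro occ312_append) auto
  ultimately show ?thesis using occ312_Cons_below_all[OF low] length_alt213[OF us] by simp
qed

lemma inj_on_append_Cons:
  "inj_on (\<lambda>(us, vs). us @ a # vs) {(us, vs). a \<notin> set us \<and> a \<notin> set vs}"
  by (auto intro!: inj_onI simp: append_Cons_eq_iff)

lemma weight_join:
  fixes q :: real
  assumes "q \<noteq> 0" "us \<in> alt213 (a + 2 * j + 2) k" "vs \<in> alt213 (a + 1) j"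
  shows "q powi (int ((k + j + 1)^2) - int (occ312 (us @ a # vs)))
       = q powi (int (k^2) - int (occ312 us)) * q powi (int (j^2) - int (occ312 vs)) * q ^ j"
proof -
  have "int ((k + j + 1)^2) - int (occ312 (us @ a # vs))
      = (int (k^2) - int (occ312 us)) + (int (j^2) - int (occ312 vs)) + int j"
    using occ312_join[OF assms(2,3)] by (simp add: power2_eq_square algebra_simps)
  then show ?thesis using assms(1) by (simp add: power_int_add)
qed

lemma sum_alt213_Suc:
  "(\<Sum>xs\<in>alt213 a (Suc m). f xs) =
    (\<Sum>k\<le>m. \<Sum>(us, vs)\<in>alt213 (a + 2 * (m - k) + 2) k \<times> alt213 (a + 1) (m - k). f (us @ a # vs))"
proof -
  let ?join = "\<lambda>(us, vs). us @ a # vs"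
  let ?P = "\<lambda>k. alt213 (a + 2 * (m - k) + 2) k \<times> alt213 (a + 1) (m - k)"
  have outside: "a \<notin> set us \<and> a \<notin> set vs" if "(us, vs) \<in> ?P k" for us vs k
    using that by (auto simp: alt213_def)
  have inj: "inj_on ?join (?P k)" for k
    by (rule inj_on_subset[OF inj_on_append_Cons]) (use outside in blast)
  have same_piece: "k = k'"
    if "(us, vs) \<in> ?P k" "(us', vs') \<in> ?P k'" "us @ a # vs = us' @ a # vs'" for k k' us vs us' vs'
  proof -
    have "us = us'" using that outside[OF that(1)] outside[OF that(2)] by (simp add: append_Cons_eq_iff)
    moreover have "us \<in> alt213 (a + 2 * (m - k) + 2) k" "us' \<in> alt213 (a + 2 * (m - k') + 2) k'"
      using that(1,2) by auto
    ultimately show "k = k'" using length_alt213 by (metis add_right_cancel mult_left_cancel zero_neq_numeral)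
  qed
  have "(\<Sum>xs\<in>alt213 a (Suc m). f xs) = (\<Sum>k\<le>m. \<Sum>xs\<in>?join ` ?P k. f xs)"
    unfolding alt213_Suc
  proof (rule sum.UNION_disjoint)
    show "\<forall>k\<in>{..m}. \<forall>k'\<in>{..m}. k \<noteq> k' \<longrightarrow> ?join ` ?P k \<inter> ?join ` ?P k' = {}"
      using same_piece by fast
  qed (simp_all add: finite_alt213)
  also have "\<dots> = (\<Sum>k\<le>m. \<Sum>(us, vs)\<in>?P k. f (us @ a # vs))"
  proof (rule sum.cong[OF refl])
    fix k
    show "(\<Sum>xs\<in>?join ` ?P k. f xs) = (\<Sum>(us, vs)\<in>?P k. f (us @ a # vs))"
      unfolding sum.reindex[OF inj] by (simp add: comp_def case_prod_unfold)
  qed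
  finally show ?thesis .
qed

definition alt213_gf :: "real \<Rightarrow> nat \<Rightarrow> nat \<Rightarrow> real" where
  "alt213_gf q a n = (\<Sum>xs\<in>alt213 a n. q powi (int (n^2) - int (occ312 xs)))"

lemma sum_alt213_join:
  fixes q :: real
  assumes "q \<noteq> 0"
  shows "(\<Sum>(us, vs)\<in>alt213 (a + 2 * j + 2) k \<times> alt213 (a + 1) j.
            q powi (int ((k + j + 1)^2) - int (occ312 (us @ a # vs))))
       = alt213_gf q (a + 2 * j + 2) k * alt213_gf q (a + 1) j * q ^ j"
proof -
  have "(\<Sum>(us, vs)\<in>alt213 (a + 2 * j + 2) k \<times> alt213 (a + 1) j.
            q powi (int ((k + j + 1)^2) - int (occ312 (us @ a # vs))))
      = (\<Sum>(us, vs)\<in>alt213 (a + 2 * j + 2) k \<times> alt213 (a + 1) j.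
            q powi (int (k^2) - int (occ312 us)) * q powi (int (j^2) - int (occ312 vs)) * q ^ j)"
  proof (rule sum.cong[OF refl])
    fix p assume "p \<in> alt213 (a + 2 * j + 2) k \<times> alt213 (a + 1) j"
    then obtain us vs where "p = (us, vs)" "us \<in> alt213 (a + 2 * j + 2) k" "vs \<in> alt213 (a + 1) j"
      by blast
    then show "(case p of (us, vs) \<Rightarrow> q powi (int ((k + j + 1)^2) - int (occ312 (us @ a # vs))))
        = (case p of (us, vs) \<Rightarrow>
            q powi (int (k^2) - int (occ312 us)) * q powi (int (j^2) - int (occ312 vs)) * q ^ j)"
      using weight_join[OF assms] by simp
  qed
  then show ?thesis unfolding alt213_gf_def
    by (simp add: sum.cartesian_product[symmetric] sum_distrib_left sum_distrib_right, subst sum.swap) simp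
qed

lemma alt213_gf_eq_qcatalan:
  fixes q :: real
  assumes "q \<noteq> 0"
  shows "alt213_gf q a n = qcatalan q n"
proof (induction n arbitrary: a rule: less_induct)
  case (less n)
  show ?case
  proof (cases n)
    case 0
    then show ?thesis by (simp add: alt213_gf_def alt213_0 ascents_below_def)
  next
    case (Suc m)
    have "alt213_gf q a n
        = (\<Sum>k\<le>m. \<Sum>(us, vs)\<in>alt213 (a + 2 * (m - k) + 2) k \<times> alt213 (a + 1) (m - k).
              q powi (int (n^2) - int (occ312 (us @ a # vs))))"
      unfolding alt213_gf_def Suc by (rule sum_alt213_Suc)
    also have "\<dots> = (\<Sum>k\<le>m. qcatalan q k * qcatalan q (m - k) * q ^ (m - k))"
    proof (rule sum.cong[OF refl])
      fix k assume k: "k \<in> {..m}"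
      then have n: "n = k + (m - k) + 1" using Suc by simp
      show "(\<Sum>(us, vs)\<in>alt213 (a + 2 * (m - k) + 2) k \<times> alt213 (a + 1) (m - k).
              q powi (int (n^2) - int (occ312 (us @ a # vs))))
          = qcatalan q k * qcatalan q (m - k) * q ^ (m - k)"
        unfolding n sum_alt213_join[OF assms] using less.IH k Suc by simp
    qed
    also have "\<dots> = qcatalan q n"
      unfolding Suc qcatalan.simps
      by (rule sum.reindex_bij_witness[of _ "\<lambda>k. m - k" "\<lambda>k. m - k"]) (auto simp: algebra_simps)
    finally show ?thesis .
  qed
qed

section \<open>From permutations to words\<close>

lemma ascents_below_conv_card:
  "ascents_below x xs = card {j. Suc j < length xs \<and> xs ! j < xs ! Suc j \<and> xs ! Suc j < x}"
  unfolding ascents_below_def length_filter_conv_card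
  by (rule arg_cong[where f = card]) (auto simp: nth_tl)

lemma inj_on_Suc_pair: "inj_on (\<lambda>(i, j). (Suc i, Suc j)) A"
  by (auto simp: inj_on_def)

lemma occ312_conv_card:
  "occ312 xs = card {(i, j). i < j \<and> Suc j < length xs \<and> xs ! j < xs ! Suc j \<and> xs ! Suc j < xs ! i}"
proof (induction xs)
  case Nil
  show ?case by simp
next
  case (Cons x xs)
  define S where "S = {(i, j). i < j \<and> Suc j < length xs \<and> xs ! j < xs ! Suc j \<and> xs ! Suc j < xs ! i}"
  define J where "J = {j. Suc j < length xs \<and> xs ! j < xs ! Suc j \<and> xs ! Suc j < x}"
  let ?ys = "x # xs"
  have split: "{(i, j). i < j \<and> Suc j < length ?ys \<and> ?ys ! j < ?ys ! Suc j \<and> ?ys ! Suc j < ?ys ! i}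
      = (\<lambda>j. (0, Suc j)) ` J \<union> (\<lambda>(i, j). (Suc i, Suc j)) ` S"
  proof (rule set_eqI)
    fix p :: "nat \<times> nat"
    obtain i j where p: "p = (i, j)" by fastforce
    show "p \<in> {(i, j). i < j \<and> Suc j < length ?ys \<and> ?ys ! j < ?ys ! Suc j \<and> ?ys ! Suc j < ?ys ! i}
        \<longleftrightarrow> p \<in> (\<lambda>j. (0, Suc j)) ` J \<union> (\<lambda>(i, j). (Suc i, Suc j)) ` S"
      unfolding p J_def S_def by (cases i; cases j) auto
  qed
  have "finite J" unfolding J_def by (rule finite_subset[of _ "{..<length xs}"]) auto
  moreover have "finite S"
    unfolding S_def by (rule finite_subset[of _ "{..<length xs} \<times> {..<length xs}"]) auto
  ultimately have "card ((\<lambda>j. (0, Suc j)) ` J \<union> (\<lambda>(i, j). (Suc i, Suc j)) ` S) = card J + card S"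
    by (subst card_Un_disjoint) (auto simp: card_image inj_on_def card_image[OF inj_on_Suc_pair])
  then show ?case
    unfolding split using Cons.IH by (simp add: J_def S_def ascents_below_conv_card)
qed

definition oneline :: "nat \<Rightarrow> (nat \<Rightarrow> nat) \<Rightarrow> nat list" where
  "oneline m p = map p [1..<m + 1]"

lemma length_oneline [simp]: "length (oneline m p) = m"
  by (simp add: oneline_def)

lemma nth_oneline [simp]: "k < m \<Longrightarrow> oneline m p ! k = p (Suc k)"
  by (simp add: oneline_def del: upt_Suc)

lemma pat312_eq_occ312: "pat312 m p = occ312 (oneline m p)"
proof -
  define I where
    "I = {(i, j). i < j \<and> Suc j < m \<and> oneline m p ! j < oneline m p ! Suc j \<and> oneline m p ! Suc j < oneline m p ! i}"
  have "{(i, j). 1 \<le> i \<and> i < j \<and> j < m \<and> p j < p (j + 1) \<and> p (j + 1) < p i} = (\<lambda>(i, j). (Suc i, Suc j)) ` I"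
  proof (rule set_eqI)
    fix ij :: "nat \<times> nat"
    obtain i j where ij: "ij = (i, j)" by fastforce
    show "ij \<in> {(i, j). 1 \<le> i \<and> i < j \<and> j < m \<and> p j < p (j + 1) \<and> p (j + 1) < p i}
        \<longleftrightarrow> ij \<in> (\<lambda>(i, j). (Suc i, Suc j)) ` I"
      unfolding ij I_def by (cases i; cases j) auto
  qed
  then have "pat312 m p = card I"
    unfolding pat312_def by (simp add: card_image[OF inj_on_Suc_pair])
  then show ?thesis unfolding I_def occ312_conv_card by simp
qed

lemma avoids213_list_conv_nth:
  assumes "distinct xs"
  shows "avoids213_list xs \<longleftrightarrow> \<not> (\<exists>i j k. i < j \<and> j < k \<and> k < length xs \<and> xs ! j < xs ! i \<and> xs ! i < xs ! k)"
proof
  assume av: "avoids213_list xs"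
  show "\<not> (\<exists>i j k. i < j \<and> j < k \<and> k < length xs \<and> xs ! j < xs ! i \<and> xs ! i < xs ! k)"
  proof
    assume "\<exists>i j k. i < j \<and> j < k \<and> k < length xs \<and> xs ! j < xs ! i \<and> xs ! i < xs ! k"
    then obtain i j k where c: "i < j" "j < k" "k < length xs" "xs ! j < xs ! i" "xs ! i < xs ! k" by blast
    have "precedes xs (xs ! i) (xs ! j)" "precedes xs (xs ! j) (xs ! k)"
      unfolding precedes_conv_nth using c by (blast intro: less_trans)+
    then show False using av c unfolding avoids213_list_def by blast
  qed
next
  assume no: "\<not> (\<exists>i j k. i < j \<and> j < k \<and> k < length xs \<and> xs ! j < xs ! i \<and> xs ! i < xs ! k)"
  show "avoids213_list xs" unfolding avoids213_list_def
  proof (intro allI impI notI)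
    fix x y z assume "precedes xs x y" "precedes xs y z" and c: "y < x \<and> x < z"
    then obtain i j j' k where ij: "i < j" "j < length xs" "xs ! i = x" "xs ! j = y"
      and jk: "j' < k" "k < length xs" "xs ! j' = y" "xs ! k = z"
      unfolding precedes_conv_nth by blast
    have "j = j'" using ij jk assms nth_eq_iff_index_eq by (metis less_trans)
    then show False using no ij jk c by blast
  qed
qed

lemma avoids213_eq_avoids213_list:
  assumes "distinct (oneline m p)"
  shows "avoids213 m p \<longleftrightarrow> avoids213_list (oneline m p)"
proof -
  have shift: "(\<exists>i j k. 1 \<le> i \<and> i < j \<and> j < k \<and> k \<le> m \<and> p j < p i \<and> p i < p k) \<longleftrightarrow>
        (\<exists>i j k. i < j \<and> j < k \<and> k < m \<and> p (Suc j) < p (Suc i) \<and> p (Suc i) < p (Suc k))"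
  proof
    assume "\<exists>i j k. 1 \<le> i \<and> i < j \<and> j < k \<and> k \<le> m \<and> p j < p i \<and> p i < p k"
    then obtain i j k where "1 \<le> i" "i < j" "j < k" "k \<le> m" "p j < p i" "p i < p k" by blast
    then show "\<exists>i j k. i < j \<and> j < k \<and> k < m \<and> p (Suc j) < p (Suc i) \<and> p (Suc i) < p (Suc k)"
      by (intro exI[of _ "i - 1"] exI[of _ "j - 1"] exI[of _ "k - 1"]) auto
  next
    assume "\<exists>i j k. i < j \<and> j < k \<and> k < m \<and> p (Suc j) < p (Suc i) \<and> p (Suc i) < p (Suc k)"
    then obtain i j k where "i < j" "j < k" "k < m" "p (Suc j) < p (Suc i)" "p (Suc i) < p (Suc k)" by blast
    then show "\<exists>i j k. 1 \<le> i \<and> i < j \<and> j < k \<and> k \<le> m \<and> p j < p i \<and> p i < p k"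
      by (intro exI[of _ "Suc i"] exI[of _ "Suc j"] exI[of _ "Suc k"]) auto
  qed
  have "i < j \<and> j < k \<and> k < m \<Longrightarrow>
      (oneline m p ! j < oneline m p ! i \<and> oneline m p ! i < oneline m p ! k
        \<longleftrightarrow> p (Suc j) < p (Suc i) \<and> p (Suc i) < p (Suc k))" for i j k
    by simp
  then show ?thesis
    unfolding avoids213_def avoids213_list_conv_nth[OF assms] shift length_oneline by blast
qed

definition down_up_on :: "(nat \<Rightarrow> nat) \<Rightarrow> nat \<Rightarrow> nat \<Rightarrow> bool" where
  "down_up_on f a n \<longleftrightarrow>
    (\<forall>i\<in>{a..<a + 2 * n}. if even (i - a) then f (Suc i) < f i else f i < f (Suc i))"

lemma down_up_on_Suc:
  "down_up_on f a (Suc n) \<longleftrightarrow> f (Suc a) < f a \<and> f (Suc a) < f (Suc (Suc a)) \<and> down_up_on f (Suc (Suc a)) n"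
proof -
  have "{a..<a + 2 * Suc n} = {a, Suc a} \<union> {Suc (Suc a)..<Suc (Suc a) + 2 * n}" by auto
  moreover have "even (i - a) \<longleftrightarrow> even (i - Suc (Suc a))" if le: "Suc (Suc a) \<le> i" for i
  proof -
    obtain d where "i = Suc (Suc a) + d" using le_Suc_ex[OF le] by blast
    then show ?thesis by simp
  qed
  ultimately show ?thesis unfolding down_up_on_def by auto
qed

lemma down_up_map_upt: "down_up (map f [a..<a + 2 * n + 1]) \<longleftrightarrow> down_up_on f a n"
proof (induction n arbitrary: a)
  case 0
  then show ?case by (simp add: down_up_on_def)
next
  case (Suc n)
  have "[a..<a + 2 * Suc n + 1] = a # Suc a # [Suc (Suc a)..<Suc (Suc a) + 2 * n + 1]"
    by (simp add: upt_rec)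
  moreover have "[Suc (Suc a)..<Suc (Suc a) + 2 * n + 1] = Suc (Suc a) # [Suc (Suc (Suc a))..<Suc (Suc a) + 2 * n + 1]"
    by (simp add: upt_rec)
  ultimately show ?case using Suc.IH[of "Suc (Suc a)"] by (simp add: down_up_on_Suc)
qed

definition descents :: "nat \<Rightarrow> (nat \<Rightarrow> nat) \<Rightarrow> nat set" where
  "descents m p = {i \<in> {1..m - 1}. p (i + 1) < p i}"

lemma des_eq_card_descents: "des m p = card (descents m p)"
  by (simp add: des_def descents_def)

text \<open>Under the convention \<open>p(0) = p(m+1) = 0\<close> a double descent at \<open>i = m\<close> is just a descent at
  \<open>m - 1\<close>, and there is never one at \<open>i = 1\<close>.\<close>
lemma dd_eq_0_iff:
  assumes "p permutes {1..m}"
  shows "dd m p = 0 \<longleftrightarrow> (\<forall>i\<in>descents m p. Suc i \<notin> descents m p) \<and> m - 1 \<notin> descents m p"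
proof -
  let ?D = "descents m p"
  have pos: "p i \<noteq> 0" if "i \<in> {1..m}" for i
  proof -
    have "p i \<in> {1..m}" using permutes_in_image[OF assms] that by simp
    then show ?thesis by simp
  qed
  have "dd m p = 0 \<longleftrightarrow>
      (\<forall>i\<in>{1..m}. \<not> (pext m p (i - 1) > pext m p i \<and> pext m p i > pext m p (i + 1)))"
    unfolding dd_def by (subst card_eq_0_iff) auto
  also have "\<dots> \<longleftrightarrow> (\<forall>i\<in>?D. Suc i \<notin> ?D) \<and> m - 1 \<notin> ?D"
  proof
    assume no_dd: "\<forall>i\<in>{1..m}. \<not> (pext m p (i - 1) > pext m p i \<and> pext m p i > pext m p (i + 1))"
    show "(\<forall>i\<in>?D. Suc i \<notin> ?D) \<and> m - 1 \<notin> ?D"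
    proof (intro conjI ballI notI)
      fix i assume "i \<in> ?D" "Suc i \<in> ?D"
      then have "1 \<le> i" "Suc (Suc i) \<le> m" "p (Suc i) < p i" "p (Suc (Suc i)) < p (Suc i)"
        by (auto simp: descents_def)
      then show False using no_dd[rule_format, of "Suc i"] by (simp add: pext_def)
    next
      assume "m - 1 \<in> ?D"
      then show False using no_dd[rule_format, of m] pos[of m] by (auto simp: descents_def pext_def)
    qed
  next
    assume D: "(\<forall>i\<in>?D. Suc i \<notin> ?D) \<and> m - 1 \<notin> ?D"
    show "\<forall>i\<in>{1..m}. \<not> (pext m p (i - 1) > pext m p i \<and> pext m p i > pext m p (i + 1))"
    proof (intro ballI notI)
      fix i assume i: "i \<in> {1..m}" and dd: "pext m p (i - 1) > pext m p i \<and> pext m p i > pext m p (i + 1)"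
      then have "i - 1 \<in> ?D" by (auto simp: descents_def pext_def split: if_splits)
      moreover have "i \<in> ?D" if "i < m" using dd i that by (auto simp: descents_def pext_def)
      ultimately show False using D i by (cases "i = m") (auto simp: descents_def)
    qed
  qed
  finally show ?thesis .
qed

lemma card_no_consecutive_le:
  "D \<subseteq> {1..2 * n} \<Longrightarrow> \<forall>i\<in>D. Suc i \<notin> D \<Longrightarrow> card D \<le> n"
proof (induction n arbitrary: D)
  case (Suc n)
  have "card (D \<inter> {1..2 * n}) \<le> n" by (rule Suc.IH) (use Suc.prems in auto)
  moreover have "card (D \<inter> {2 * n + 1, 2 * n + 2}) \<le> 1"
  proof (cases "2 * n + 1 \<in> D")
    case True
    then have "D \<inter> {2 * n + 1, 2 * n + 2} = {2 * n + 1}" using Suc.prems(2) by auto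
    then show ?thesis by simp
  next
    case False
    then have "D \<inter> {2 * n + 1, 2 * n + 2} \<subseteq> {2 * n + 2}" by auto
    then show ?thesis using card_mono[of "{2 * n + 2}"] by simp
  qed
  moreover have "D \<inter> {1..2 * n} \<union> D \<inter> {2 * n + 1, 2 * n + 2} = D" using Suc.prems(1) by auto
  then have "card D \<le> card (D \<inter> {1..2 * n}) + card (D \<inter> {2 * n + 1, 2 * n + 2})"
    using card_Un_le[of "D \<inter> {1..2 * n}" "D \<inter> {2 * n + 1, 2 * n + 2}"] by simp
  ultimately show ?case by linarith
qed simp

lemma card_odd_atLeastAtMost: "card {i \<in> {1..2 * n}. odd i} = n"
proof -
  have "{i \<in> {1..2 * n}. odd i} = (\<lambda>k. 2 * k + 1) ` {..<n}"
  proof (intro set_eqI iffI)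
    fix i assume "i \<in> {i \<in> {1..2 * n}. odd i}"
    then obtain k where "i = 2 * k + 1" "i \<le> 2 * n" by (auto elim: oddE)
    then show "i \<in> (\<lambda>k. 2 * k + 1) ` {..<n}" by auto
  qed auto
  then show ?thesis by (simp add: card_image inj_on_def)
qed

lemma no_consecutive_eq_odds:
  assumes "D \<subseteq> {1..2 * n}"
  shows "(\<forall>i\<in>D. Suc i \<notin> D) \<and> 2 * n \<notin> D \<and> card D = n \<longleftrightarrow> D = {i \<in> {1..2 * n}. odd i}"
proof
  assume "(\<forall>i\<in>D. Suc i \<notin> D) \<and> 2 * n \<notin> D \<and> card D = n"
  with assms show "D = {i \<in> {1..2 * n}. odd i}"
  proof (induction n arbitrary: D)
    case (Suc n)
    have "2 * n + 1 \<in> D"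
    proof (rule ccontr)
      assume "2 * n + 1 \<notin> D"
      then have "D \<subseteq> {1..2 * n}" using Suc.prems by (auto simp: le_Suc_eq)
      then have "card D \<le> n" using card_no_consecutive_le Suc.prems by blast
      then show False using Suc.prems by simp
    qed
    moreover have "finite D" using Suc.prems(1) finite_subset by blast
    moreover have "D - {2 * n + 1} = {i \<in> {1..2 * n}. odd i}"
    proof (rule Suc.IH)
      show "D - {2 * n + 1} \<subseteq> {1..2 * n}"
      proof
        fix x assume "x \<in> D - {2 * n + 1}"
        then have "1 \<le> x" "x \<le> 2 * n + 2" "x \<noteq> 2 * n + 1" "x \<noteq> 2 * n + 2" using Suc.prems by auto
        then show "x \<in> {1..2 * n}" by auto
      qed
      show "(\<forall>i\<in>D - {2 * n + 1}. Suc i \<notin> D - {2 * n + 1}) \<and> 2 * n \<notin> D - {2 * n + 1}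
          \<and> card (D - {2 * n + 1}) = n"
        using Suc.prems \<open>2 * n + 1 \<in> D\<close> \<open>finite D\<close> by auto
    qed
    ultimately have "D = insert (2 * n + 1) {i \<in> {1..2 * n}. odd i}" by blast
    also have "\<dots> = {i \<in> {1..2 * Suc n}. odd i}" by (auto simp: le_Suc_eq)
    finally show ?case .
  qed simp
next
  assume D: "D = {i \<in> {1..2 * n}. odd i}"
  show "(\<forall>i\<in>D. Suc i \<notin> D) \<and> 2 * n \<notin> D \<and> card D = n"
    unfolding D using card_odd_atLeastAtMost[of n] by auto
qed

lemma down_up_on_iff_descents:
  assumes "inj_on p {1..2 * n + 1}"
  shows "down_up_on p 1 n \<longleftrightarrow> descents (2 * n + 1) p = {i \<in> {1..2 * n}. odd i}"
proof -
  have step: "(if even (i - 1) then p (Suc i) < p i else p i < p (Suc i)) \<longleftrightarrow> (p (Suc i) < p i \<longleftrightarrow> odd i)"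
    if i: "i \<in> {1..<1 + 2 * n}" for i
  proof -
    have "p i \<noteq> p (Suc i)" using inj_onD[OF assms, of i "Suc i"] i by auto
    moreover have "even (i - 1) \<longleftrightarrow> odd i" using i by (cases i) auto
    ultimately show ?thesis by auto
  qed
  have "down_up_on p 1 n \<longleftrightarrow> (\<forall>i\<in>{1..<1 + 2 * n}. p (Suc i) < p i \<longleftrightarrow> odd i)"
    unfolding down_up_on_def by (rule ball_cong[OF refl step])
  moreover have "{1..<1 + 2 * n} = {1..2 * n}" by auto
  moreover have "descents (2 * n + 1) p = {i \<in> {1..2 * n}. p (Suc i) < p i}"
    by (simp add: descents_def)
  ultimately show ?thesis by blast
qed

lemma dd_des_iff_down_up_on:
  assumes "p permutes {1..2 * n + 1}"
  shows "dd (2 * n + 1) p = 0 \<and> des (2 * n + 1) p = n \<longleftrightarrow> down_up_on p 1 n"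
proof -
  let ?D = "descents (2 * n + 1) p"
  have "?D \<subseteq> {1..2 * n}" by (auto simp: descents_def)
  have "dd (2 * n + 1) p = 0 \<and> des (2 * n + 1) p = n \<longleftrightarrow> (\<forall>i\<in>?D. Suc i \<notin> ?D) \<and> 2 * n \<notin> ?D \<and> card ?D = n"
    using dd_eq_0_iff[OF assms] by (simp add: des_eq_card_descents)
  also have "\<dots> \<longleftrightarrow> ?D = {i \<in> {1..2 * n}. odd i}"
    by (rule no_consecutive_eq_odds) (auto simp: descents_def)
  also have "\<dots> \<longleftrightarrow> down_up_on p 1 n"
    using down_up_on_iff_descents[OF permutes_inj_on[OF assms]] by simp
  finally show ?thesis .
qed

lemma bij_betw_oneline:
  "bij_betw (oneline m) {p. p permutes {1..m}} {xs. distinct xs \<and> set xs = {1..m}}"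
proof (rule bij_betw_imageI)
  show "inj_on (oneline m) {p. p permutes {1..m}}"
  proof (rule inj_onI, rule ext)
    fix p p' x assume p: "p \<in> {p. p permutes {1..m}}" and p': "p' \<in> {p. p permutes {1..m}}"
      and eq: "oneline m p = oneline m p'"
    show "p x = p' x"
    proof (cases "x \<in> {1..m}")
      case True
      then have "oneline m p ! (x - 1) = p x" "oneline m p' ! (x - 1) = p' x" by auto
      then show ?thesis using eq by simp
    next
      case False
      then show ?thesis using p p' by (simp add: permutes_not_in)
    qed
  qed
next
  have "oneline m p \<in> {xs. distinct xs \<and> set xs = {1..m}}" if "p permutes {1..m}" for p
    using permutes_inj_on[OF that] permutes_image[OF that]
    by (simp add: oneline_def distinct_map atLeastLessThanSuc_atLeastAtMost del: upt_Suc)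
  moreover have "xs \<in> oneline m ` {p. p permutes {1..m}}"
    if xs: "distinct xs" "set xs = {1..m}" for xs
  proof -
    have len: "length xs = m" using distinct_card[OF xs(1)] xs(2) by simp
    define p where "p i = (if i \<in> {1..m} then xs ! (i - 1) else i)" for i
    have "bij_betw (\<lambda>i. i - 1) {1..m} {..<m}"
      by (rule bij_betw_byWitness[where f' = Suc]) auto
    then have "bij_betw ((!) xs \<circ> (\<lambda>i. i - 1)) {1..m} {1..m}"
      using bij_betw_nth[OF xs(1) _ xs(2)[symmetric]] len by (auto intro: bij_betw_trans)
    then have "bij_betw p {1..m} {1..m}"
      by (rule bij_betw_cong[THEN iffD1, rotated]) (simp add: p_def)
    then have "p permutes {1..m}" by (rule bij_imp_permutes) (auto simp: p_def)
    moreover have "oneline m p = xs" by (rule nth_equalityI) (auto simp: len p_def)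
    ultimately show ?thesis by blast
  qed
  ultimately show "oneline m ` {p. p permutes {1..m}} = {xs. distinct xs \<and> set xs = {1..m}}" by blast
qed

lemma bij_betw_S213_alt213: "bij_betw (oneline (2 * n + 1)) (S213 (2 * n + 1) n) (alt213 1 n)"
proof -
  have "S213 (2 * n + 1) n =
      {p \<in> {p. p permutes {1..2 * n + 1}}. avoids213 (2 * n + 1) p \<and> dd (2 * n + 1) p = 0 \<and> des (2 * n + 1) p = n}"
    by (auto simp: S213_def)
  moreover have "alt213 1 n =
      {xs \<in> {xs. distinct xs \<and> set xs = {1..2 * n + 1}}. down_up xs \<and> avoids213_list xs}"
    by (auto simp: alt213_def atLeastLessThanSuc_atLeastAtMost)
  moreover have "down_up (oneline (2 * n + 1) p) \<and> avoids213_list (oneline (2 * n + 1) p)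
      \<longleftrightarrow> avoids213 (2 * n + 1) p \<and> dd (2 * n + 1) p = 0 \<and> des (2 * n + 1) p = n"
    if "p \<in> {p. p permutes {1..2 * n + 1}}" for p
  proof -
    have "distinct (oneline (2 * n + 1) p)" using bij_betw_oneline that by (auto dest: bij_betw_apply)
    moreover have "down_up (oneline (2 * n + 1) p) \<longleftrightarrow> down_up_on p 1 n"
      using down_up_map_upt[of p 1 n] by (simp add: oneline_def add.commute del: upt_Suc)
    ultimately show ?thesis
      using avoids213_eq_avoids213_list dd_des_iff_down_up_on that by blast
  qed
  ultimately show ?thesis by (simp only:) (rule bij_betw_Collect[OF bij_betw_oneline])
qed

theorem proposition3p10:
  fixes n :: nat and q :: real
  assumes "n \<ge> 1" and "q \<noteq> 0"
  shows "C1 n q = (\<Sum>p\<in>S213 (2 * n + 1) n. q powi (int (n ^ 2) - int (pat312 (2 * n + 1) p)))"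
  \<comment> \<open>The identity also holds for \<open>n = 0\<close>.\<close>
proof -
  have "(\<Sum>p\<in>S213 (2 * n + 1) n. q powi (int (n ^ 2) - int (pat312 (2 * n + 1) p)))
      = (\<Sum>p\<in>S213 (2 * n + 1) n. q powi (int (n ^ 2) - int (occ312 (oneline (2 * n + 1) p))))"
    by (simp add: pat312_eq_occ312)
  also have "\<dots> = alt213_gf q 1 n"
    unfolding alt213_gf_def by (rule sum.reindex_bij_betw[OF bij_betw_S213_alt213])
  also have "\<dots> = C1 n q" by (simp add: alt213_gf_eq_qcatalan[OF assms(2)] C1_eq_qcatalan)
  finally show ?thesis ..
qed

end
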